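(* Suppose that for every admissible set $\mathcal{H}$ with $|\mathcal{H}| = 3$, the difference set $\mathcal{D}(\mathcal{H})$ contains a weak Polignac number. Then \[ \liminf_{x \to \infty} \frac{\mathcal{P}(x)}{x} \;\geq\; \frac{1}{6}. \]
   Context: A positive integer $d$ is a weak Polignac number if there are infinitely many pairs of primes $(p,q)$ with $q - p = d$. For real $x$, $\mathcal{P}(x)$ denotes the number of weak Polignac numbers less than or equal to $x$. A finite set of integers $\mathcal{H} = \{h_1, \ldots, h_k\}$ is admissible if for every prime $p$ there is an integer $m$ with $h_i \not\equiv m \pmod p$ for all $1 \le i \le k$. Its difference set is $\mathcal{D}(\mathcal{H}) = \{h_j - h_i : h_i, h_j \in \mathcal{H},\ h_i < h_j\}$. *)

theory Defs
  imports "HOL-Analysis.Analysis"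
begin

definition weak_polignac :: "nat \<Rightarrow> bool" where
  "weak_polignac d \<longleftrightarrow> d > 0 \<and>
     infinite {(p, q). prime (p::nat) \<and> prime (q::nat) \<and> int q - int p = int d}"

definition polignac_count :: "real \<Rightarrow> nat" where
  "polignac_count x = card {d :: nat. weak_polignac d \<and> real d \<le> x}"

definition admissible :: "int set \<Rightarrow> bool" where
  "admissible H \<longleftrightarrow> finite H \<and>
     (\<forall>p :: nat. prime p \<longrightarrow> (\<exists>m :: int. \<forall>h\<in>H. h mod int p \<noteq> m mod int p))"

definition diff_set :: "int set \<Rightarrow> int set" where
  "diff_set H = {hj - hi | hi hj. hi \<in> H \<and> hj \<in> H \<and> hi < hj}"

end

theory Submission
  imports Defs "HOL-Real_Asymp.Real_Asymp"
begin

text \<open>For an even \<open>r\<close> with \<open>3 \<nmid> r\<close> and every \<open>k \<ge> 1\<close> the triple \<open>{0, r, 6k + r}\<close> is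
  admissible, so one of its differences \<open>r\<close>, \<open>6k\<close>, \<open>6k + r\<close> is a weak Polignac number.
  If some such \<open>r\<close> is not, picking \<open>6k\<close> or \<open>6k + r\<close> for each \<open>k\<close> gives an injective
  sequence (as \<open>6 \<nmid> r\<close>) with \<open>k\<close>-th term at most \<open>6k + r\<close>; otherwise every \<open>6k + 2\<close>
  qualifies. Either way there are at least \<open>x/6 - O(1)\<close> weak Polignac numbers up to \<open>x\<close>.\<close>

lemma admissibleI_card_residues:
  assumes "finite H" and "\<And>p. prime p \<Longrightarrow> card ((\<lambda>h. h mod int p) ` H) < p"
  shows "admissible H"
  unfolding admissible_def
proof (intro conjI allI impI)
  fix p :: nat
  assume "prime p"
  let ?R = "(\<lambda>h. h mod int p) ` H"
  have "card ?R < card {0..<int p}"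
    using assms(2)[OF \<open>prime p\<close>] by simp
  then have "\<not> {0..<int p} \<subseteq> ?R"
    using assms(1) by (metis card_mono finite_imageI not_le)
  then obtain m where "m \<in> {0..<int p}" "m \<notin> ?R" by blast
  then show "\<exists>m. \<forall>h\<in>H. h mod int p \<noteq> m mod int p"
    by (intro exI[of _ m]) force
qed (use assms in simp)

lemma admissible_zero_even_congruent:
  fixes r s :: int
  assumes "even r" "even s" "r mod 3 = s mod 3"
  shows "admissible {0, r, s}"
proof (rule admissibleI_card_residues)
  fix p :: nat
  assume "prime p"
  let ?R = "(\<lambda>h. h mod int p) ` {0, r, s}"
  consider "p = 2" | "p = 3" | "p > 3"
    using prime_ge_2_nat[OF \<open>prime p\<close>] by linarith
  then show "card ?R < p"
  proof cases
    case 1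
    then have "?R = {0}" using assms(1,2) by auto
    then show ?thesis using 1 by simp
  next
    case 2
    then have "?R \<subseteq> {0, r mod 3}" using assms(3) by auto
    then have "card ?R \<le> card {0, r mod 3}" by (simp add: card_mono)
    also have "\<dots> \<le> 2" by (simp add: card_insert_if)
    finally show ?thesis using 2 by simp
  next
    case 3
    have "card ?R \<le> card {0, r, s}" by (rule card_image_le) simp
    also have "\<dots> \<le> 3" by (simp add: card_insert_if)
    finally show ?thesis using 3 by simp
  qed
qed simp

lemma diff_set_three:
  assumes "a < b" "b < c"
  shows "diff_set {a, b, c} = {b - a, c - a, c - b}"
proof
  show "diff_set {a, b, c} \<subseteq> {b - a, c - a, c - b}"
    using assms unfolding diff_set_def by auto
  show "{b - a, c - a, c - b} \<subseteq> diff_set {a, b, c}"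
    unfolding diff_set_def using assms less_trans[OF assms] by blast
qed

lemma weak_polignac_among_differences:
  fixes r s :: nat
  assumes hyp: "\<forall>H :: int set. admissible H \<and> card H = 3 \<longrightarrow>
             (\<exists>d \<in> diff_set H. d > 0 \<and> weak_polignac (nat d))"
    and "0 < r" "r < s" "even r" "even s" "r mod 3 = s mod 3"
  shows "weak_polignac r \<or> weak_polignac s \<or> weak_polignac (s - r)"
proof -
  let ?H = "{0, int r, int s}"
  have "int r mod 3 = int s mod 3"
    using assms(6) zmod_int[of r 3] zmod_int[of s 3] by simp
  then have "admissible ?H"
    using assms(4,5) by (intro admissible_zero_even_congruent) auto
  moreover have "card ?H = 3" using assms(2,3) by simp
  ultimately obtain d where "d \<in> diff_set ?H" "weak_polignac (nat d)"
    using hyp by blast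
  moreover have "diff_set ?H = {int r, int s, int (s - r)}"
    using assms(2,3) by (subst diff_set_three) auto
  ultimately show ?thesis by auto
qed

lemma weak_polignac_sequence:
  assumes hyp: "\<forall>H :: int set. admissible H \<and> card H = 3 \<longrightarrow>
             (\<exists>d \<in> diff_set H. d > 0 \<and> weak_polignac (nat d))"
  shows "\<exists>r f. inj_on f {1..} \<and> (\<forall>k\<ge>1. weak_polignac (f k) \<and> f k \<le> 6 * k + r)"
proof (cases "\<exists>r::nat. even r \<and> r mod 3 \<noteq> 0 \<and> \<not> weak_polignac r")
  case True
  then obtain r :: nat where r: "even r" "r mod 3 \<noteq> 0" "\<not> weak_polignac r" by blast
  define f where "f k = (if weak_polignac (6 * k) then 6 * k else 6 * k + r)" for k
  have "inj_on f {1..}"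
  proof (rule inj_onI)
    fix a b
    assume "f a = f b"
    then show "a = b" using r(2) unfolding f_def
      by (auto split: if_splits) presburger+
  qed
  moreover have "weak_polignac (f k)" if "k \<ge> 1" for k
  proof -
    have "r > 0" using r(2) by (rule contrapos_np) simp
    moreover have "(6 * k + r) mod 3 = r mod 3" by presburger
    ultimately show ?thesis
      using weak_polignac_among_differences[OF hyp, of r "6 * k + r"] r that
      unfolding f_def by auto
  qed
  moreover have "f k \<le> 6 * k + r" for k unfolding f_def by simp
  ultimately show ?thesis by blast
next
  case False
  have "weak_polignac (6 * k + 2)" for k :: nat
  proof -
    have "even (6 * k + 2)" "(6 * k + 2) mod 3 \<noteq> 0" by presburger+
    then show ?thesis using False by blast
  qed
  moreover have "inj_on (\<lambda>k::nat. 6 * k + 2) {1..}" by (auto intro: inj_onI)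
  ultimately show ?thesis by (intro exI[of _ 2] exI[of _ "\<lambda>k. 6 * k + 2"]) auto
qed

lemma finite_weak_polignac_le: "finite {d. weak_polignac d \<and> real d \<le> x}"
  by (rule finite_subset[of _ "{..nat \<lceil>x\<rceil>}"]) (auto, linarith)

lemma polignac_count_ge_linear:
  fixes c r :: nat and f :: "nat \<Rightarrow> nat" and x :: real
  assumes "c > 0" "inj_on f {1..}" "\<forall>k\<ge>1. weak_polignac (f k) \<and> f k \<le> c * k + r"
  shows "(x - r) / c - 1 \<le> real (polignac_count x)"
proof -
  define n where "n = nat \<lfloor>(x - r) / c\<rfloor>"
  have image_le: "f ` {1..n} \<subseteq> {d. weak_polignac d \<and> real d \<le> x}"
  proof clarify
    fix k assume k: "k \<in> {1..n}"
    then have "n \<ge> 1" by simp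
    then have "\<lfloor>(x - r) / c\<rfloor> \<ge> 1" unfolding n_def by linarith
    then have "real n = \<lfloor>(x - r) / c\<rfloor>" unfolding n_def by simp
    moreover have "real k \<le> real n" using k by simp
    ultimately have "real k \<le> (x - r) / c" by linarith
    then have "c * real k \<le> x - r"
      using \<open>c > 0\<close> by (simp add: le_divide_eq mult.commute)
    have "f k \<le> c * k + r" using assms(3) k by simp
    then have "real (f k) \<le> real (c * k + r)" by (rule of_nat_mono)
    also have "\<dots> \<le> x" using \<open>c * real k \<le> x - r\<close> by simp
    finally show "weak_polignac (f k) \<and> real (f k) \<le> x"
      using assms(3) k by simp
  qed
  have "inj_on f {1..n}" using assms(2) by (rule inj_on_subset) auto
  then have "n = card (f ` {1..n})" by (simp add: card_image)
  also have "\<dots> \<le> polignac_count x"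
    unfolding polignac_count_def by (rule card_mono[OF finite_weak_polignac_le image_le])
  finally have "n \<le> polignac_count x" .
  moreover have "(x - r) / c - 1 \<le> real n" unfolding n_def by linarith
  ultimately show ?thesis by linarith
qed

lemma Liminf_ratio_ge:
  fixes g :: "real \<Rightarrow> real"
  assumes "\<And>x. a * x - b \<le> g x"
  shows "ereal a \<le> Liminf at_top (\<lambda>x. ereal (g x / x))"
proof -
  have "((\<lambda>x. ereal ((a * x - b) / x)) \<longlongrightarrow> ereal a) at_top"
    by (intro tendsto_ereal) real_asymp
  then have "Liminf at_top (\<lambda>x. ereal ((a * x - b) / x)) = ereal a"
    by (intro lim_imp_Liminf) simp_all
  moreover have "\<forall>\<^sub>F x in at_top. ereal ((a * x - b) / x) \<le> ereal (g x / x)"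
    using eventually_gt_at_top[of 0]
    by eventually_elim (simp add: divide_right_mono assms)
  ultimately show ?thesis by (metis Liminf_mono)
qed

theorem mainTheorem3:
  assumes "\<forall>H :: int set. admissible H \<and> card H = 3 \<longrightarrow>
             (\<exists>d \<in> diff_set H. d > 0 \<and> weak_polignac (nat d))"
  shows "Liminf at_top (\<lambda>x :: real. ereal (real (polignac_count x) / x)) \<ge> ereal (1/6)"
proof -
  obtain r f where "inj_on f {1..}" "\<forall>k\<ge>1. weak_polignac (f k) \<and> f k \<le> 6 * k + r"
    using weak_polignac_sequence[OF assms] by blast
  then have "1/6 * x - (r / 6 + 1) \<le> real (polignac_count x)" for x :: real
    using polignac_count_ge_linear[of 6 f r x] by (simp add: field_simps)
  then show ?thesis by (rule Liminf_ratio_ge)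
qed

end
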